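(* Let $f\in\mathcal{F}$ be a map that is not affine (i.e. not of the form $z\mapsto az+b$), let $A$ be a finite subset of $E$, let $B$ be a finite subset of $\mathbb{C}$ and let $R>0$. Then for every $\varepsilon>0$ there exists $g\in\mathcal{F}(f,A)$ such that $d_{\mathcal{F}}(f,g)<\varepsilon$ and $g^{-1}(B)\cap D(0,R)\subset E$.
   Context: $\mathcal{F}$ is a Fréchet space of entire maps containing all complex polynomial maps, whose topology is finer than the topology of local uniform convergence on $\mathbb{C}$; $(\|\cdot\|_j)_{j\ge0}$ is a sequence of seminorms defining its topology and $d_{\mathcal{F}}(f,g)=\sum_{j\ge0}2^{-j}\min\{1,\|f-g\|_j\}$. $E$ is a countable dense subset of $\mathbb{C}$. For $f\in\mathcal{F}$ and $A\subseteq\mathbb{C}$, $\mathcal{F}(f,A)=\{g\in\mathcal{F}: g|_A=f|_A \text{ and } g'|_A=f'|_A\}$. $D(0,R)$ is the open disk of radius $R$ centered at $0$. *)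

theory Defs
  imports "HOL-Complex_Analysis.Complex_Analysis"
begin

definition dF :: "(nat \<Rightarrow> (complex \<Rightarrow> complex) \<Rightarrow> real) \<Rightarrow> (complex \<Rightarrow> complex) \<Rightarrow> (complex \<Rightarrow> complex) \<Rightarrow> real" where
  "dF nrm f g = (\<Sum>j. (1/2) ^ j * min 1 (nrm j (\<lambda>z. f z - g z)))"

text \<open>F is a Frechet space of entire maps (a complex vector space of entire functions,
  with topology given by the separating sequence of seminorms nrm, complete for dF),
  containing all complex polynomial maps, whose topology is finer than the topology of
  local uniform convergence on the complex plane.\<close>
definition frechet_entire_space ::
  "(complex \<Rightarrow> complex) set \<Rightarrow> (nat \<Rightarrow> (complex \<Rightarrow> complex) \<Rightarrow> real) \<Rightarrow> bool" where
  "frechet_entire_space F nrm \<longleftrightarrow>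
     (\<forall>f\<in>F. f holomorphic_on UNIV) \<and>
     (\<lambda>z. 0) \<in> F \<and>
     (\<forall>f\<in>F. \<forall>g\<in>F. (\<lambda>z. f z + g z) \<in> F) \<and>
     (\<forall>f\<in>F. \<forall>c. (\<lambda>z. c * f z) \<in> F) \<and>
     (\<forall>p. (\<lambda>z. poly p z) \<in> F) \<and>
     (\<forall>j. \<forall>f\<in>F. 0 \<le> nrm j f) \<and>
     (\<forall>j. \<forall>f\<in>F. \<forall>c. nrm j (\<lambda>z. c * f z) = norm c * nrm j f) \<and>
     (\<forall>j. \<forall>f\<in>F. \<forall>g\<in>F. nrm j (\<lambda>z. f z + g z) \<le> nrm j f + nrm j g) \<and>
     (\<forall>f\<in>F. (\<forall>j. nrm j f = 0) \<longrightarrow> f = (\<lambda>z. 0)) \<and>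
     (\<forall>s. (\<forall>n. s n \<in> F) \<and> (\<forall>e>0. \<exists>N. \<forall>m\<ge>N. \<forall>n\<ge>N. dF nrm (s m) (s n) < e)
          \<longrightarrow> (\<exists>l\<in>F. (\<lambda>n. dF nrm (s n) l) \<longlonglongrightarrow> 0)) \<and>
     (\<forall>K. compact K \<longrightarrow> (\<forall>e>0. \<exists>\<delta>>0. \<forall>f\<in>F. \<forall>g\<in>F.
          dF nrm f g < \<delta> \<longrightarrow> (\<forall>z\<in>K. norm (f z - g z) < e)))"

definition FA :: "(complex \<Rightarrow> complex) set \<Rightarrow> (complex \<Rightarrow> complex) \<Rightarrow> complex set \<Rightarrow> (complex \<Rightarrow> complex) set" where
  "FA F f A = {g \<in> F. (\<forall>a\<in>A. g a = f a) \<and> (\<forall>a\<in>A. deriv g a = deriv f a)}"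

end

theory Submission
  imports Defs
begin

text \<open>Choose \<open>r > R\<close> such that \<open>f\<close> takes no value of \<open>B\<close> on the circle \<open>\<bar>z\<bar> = r\<close>. The finitely
  many points of the disc \<open>\<bar>z\<bar> < r\<close> that are mapped into \<open>B\<close> but lie outside \<open>E\<close> are removed
  one at a time. To remove \<open>z0\<close>, a \<open>b0\<close>-point of multiplicity \<open>m\<close>, add a polynomial \<open>Q * T\<close>:
  \<open>Q\<close> vanishes doubly on \<open>A\<close> and to full multiplicity at the other \<open>B\<close>-points of the disc, and
  \<open>T\<close> is the Taylor polynomial of \<open>-(f - b0) / Q\<close> at a point \<open>w \<in> E\<close> close to \<open>z0\<close>, so that the
  new function has a \<open>b0\<close>-point of multiplicity \<open>m\<close> at \<open>w\<close>. As \<open>Q * T\<close> is small on the circle,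
  Rouche's theorem shows that the prescribed points are all the \<open>B\<close>-points in the disc. It is
  small in \<open>F\<close> because on polynomials of bounded degree the seminorms are controlled by the
  coefficients, which Cauchy's estimates bound by the maximum on the unit circle.\<close>

section \<open>Order of vanishing\<close>

definition vanishes_to_order :: "nat \<Rightarrow> (complex \<Rightarrow> complex) \<Rightarrow> complex \<Rightarrow> bool" where
  "vanishes_to_order n h x \<longleftrightarrow> (\<forall>k<n. (deriv ^^ k) h x = 0)"

lemma vanishes_to_order_imp_zero:
  "vanishes_to_order n h x \<Longrightarrow> 0 < n \<Longrightarrow> h x = 0"
  unfolding vanishes_to_order_def by (metis funpow_0)

lemma vanishes_to_order_2D:
  "vanishes_to_order 2 h x \<Longrightarrow> h x = 0 \<and> deriv h x = 0"
  unfolding vanishes_to_order_def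
  using less_2_cases_iff by (metis One_nat_def funpow.simps(2) funpow_0 o_apply id_apply)

lemma vanishes_to_order_cong:
  assumes "f holomorphic_on U" "g holomorphic_on U" "open U" "x \<in> U" "\<And>z. z \<in> U \<Longrightarrow> f z = g z"
  shows "vanishes_to_order n f x \<longleftrightarrow> vanishes_to_order n g x"
  unfolding vanishes_to_order_def using higher_deriv_transform_within_open[OF assms] by simp

lemma vanishes_to_order_add:
  assumes "f holomorphic_on U" "g holomorphic_on U" "open U" "x \<in> U"
    and "vanishes_to_order n f x" "vanishes_to_order n g x"
  shows "vanishes_to_order n (\<lambda>z. f z + g z) x"
  using assms by (simp add: vanishes_to_order_def higher_deriv_add[OF assms(1-4)])

lemma vanishes_to_order_mult_left:
  assumes "u holomorphic_on U" "v holomorphic_on U" "open U" "x \<in> U"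
    and "vanishes_to_order n v x"
  shows "vanishes_to_order n (\<lambda>z. u z * v z) x"
  unfolding vanishes_to_order_def
proof (intro allI impI)
  fix k assume "k < n"
  have "(deriv ^^ k) (\<lambda>z. u z * v z) x =
      (\<Sum>i = 0..k. of_nat (k choose i) * (deriv ^^ i) u x * (deriv ^^ (k - i)) v x)"
    by (rule higher_deriv_mult[OF assms(1-4)])
  also have "\<dots> = 0"
    using assms(5) \<open>k < n\<close> by (intro sum.neutral) (auto simp: vanishes_to_order_def)
  finally show "(deriv ^^ k) (\<lambda>z. u z * v z) x = 0" .
qed

lemma vanishes_to_order_power: "vanishes_to_order n (\<lambda>z. (z - x) ^ n) x"
  by (auto simp: vanishes_to_order_def higher_deriv_power)

lemma vanishes_to_order_power_factor:
  assumes "u holomorphic_on U" "h holomorphic_on U" "open U" "x \<in> U"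
    and "\<And>z. z \<in> U \<Longrightarrow> h z = u z * (z - x) ^ n"
  shows "vanishes_to_order n h x"
proof -
  have "(\<lambda>z. u z * (z - x) ^ n) holomorphic_on U"
    by (intro holomorphic_intros assms(1))
  moreover have "vanishes_to_order n (\<lambda>z. u z * (z - x) ^ n) x"
    by (rule vanishes_to_order_mult_left[OF assms(1) _ assms(3,4) vanishes_to_order_power])
       (intro holomorphic_intros)
  ultimately show ?thesis
    using vanishes_to_order_cong[OF assms(2) _ assms(3,4)] assms(5) by blast
qed

lemma vanishes_to_order_poly_prod:
  fixes m :: "complex \<Rightarrow> nat"
  assumes "finite S" "d \<in> S"
  shows "vanishes_to_order (m d) (poly ((\<Prod>s\<in>S. [:-s, 1:] ^ m s) * X)) d"
proof (rule vanishes_to_order_power_factor[of "poly ((\<Prod>s\<in>S-{d}. [:-s, 1:] ^ m s) * X)" UNIV])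
  fix z
  have "(\<Prod>s\<in>S. [:-s, 1:] ^ m s) = [:-d, 1:] ^ m d * (\<Prod>s\<in>S-{d}. [:-s, 1:] ^ m s)"
    using assms by (simp add: prod.remove)
  then show "poly ((\<Prod>s\<in>S. [:-s, 1:] ^ m s) * X) z
      = poly ((\<Prod>s\<in>S-{d}. [:-s, 1:] ^ m s) * X) z * (z - d) ^ m d"
    by (simp add: poly_power)
qed (auto intro: holomorphic_intros)

lemma poly_prod_linear_power_nonzero:
  fixes z :: complex
  assumes "finite S" "z \<notin> S"
  shows "poly (\<Prod>s\<in>S. [:-s, 1:] ^ m s) z \<noteq> 0"
  using assms by (induction S rule: finite_induct) auto

lemma entire_finite_zeros:
  fixes h :: "complex \<Rightarrow> complex"
  assumes "h holomorphic_on UNIV" "h z1 \<noteq> 0" "bounded K"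
  shows "finite {z\<in>K. h z = 0}"
proof (cases "h constant_on UNIV")
  case True
  then have "{z\<in>K. h z = 0} = {}"
    using assms(2) by (auto simp: constant_on_def)
  then show ?thesis by (metis finite.emptyI)
next
  case False
  have "finite {z\<in>closure K. h z = 0}"
    using assms(3) False
    by (intro holomorphic_compact_finite_zeros[OF assms(1)]) (auto simp: compact_closure)
  then show ?thesis
    by (rule finite_subset[rotated]) (use closure_subset in auto)
qed

lemma zorder_pos_entire:
  fixes h :: "complex \<Rightarrow> complex"
  assumes "h holomorphic_on UNIV" "h z1 \<noteq> 0" "h x = 0"
  shows "0 < zorder h x"
  using zorder_exist_zero[OF assms(1) open_UNIV connected_UNIV UNIV_I, of x] assms(2,3) by auto

lemma vanishes_to_order_zorder:
  fixes h :: "complex \<Rightarrow> complex"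
  assumes "h holomorphic_on UNIV" "h z1 \<noteq> 0"
  shows "vanishes_to_order (nat (zorder h x)) h x"
proof -
  obtain r where r: "r > 0" "zor_poly h x holomorphic_on cball x r"
    "\<forall>w\<in>cball x r. h w = zor_poly h x w * (w - x) ^ nat (zorder h x)"
    using zorder_exist_zero[OF assms(1) open_UNIV connected_UNIV UNIV_I, of x] assms(2) by blast
  show ?thesis
    by (rule vanishes_to_order_power_factor[of "zor_poly h x" "ball x r"])
       (use r assms(1) in \<open>auto intro: holomorphic_on_subset\<close>)
qed

lemma zorder_ge_if_vanishes_to_order:
  fixes h :: "complex \<Rightarrow> complex"
  assumes "h holomorphic_on UNIV" "h z1 \<noteq> 0" "vanishes_to_order n h x"
  shows "int n \<le> zorder h x"
proof (rule zorder_geI[OF _ assms(1) open_UNIV connected_UNIV UNIV_I UNIV_I assms(2)])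
  show "h analytic_on {x}"
    using assms(1) analytic_on_open[OF open_UNIV] analytic_on_subset by blast
qed (use assms(3) in \<open>auto simp: vanishes_to_order_def\<close>)

section \<open>Counting zeros with Rouche's theorem\<close>

lemma sum_winding_number_circlepath:
  fixes c :: "complex \<Rightarrow> complex"
  assumes "r > 0" "finite Z" "Z \<inter> sphere 0 r = {}"
  shows "(\<Sum>p\<in>Z. winding_number (circlepath 0 r) p * c p) = (\<Sum>p\<in>Z \<inter> ball 0 r. c p)"
proof -
  have "winding_number (circlepath 0 r) p = (if p \<in> ball 0 r then 1 else 0)" if "p \<in> Z" for p
  proof (cases "p \<in> ball 0 r")
    case True
    then show ?thesis by (simp add: winding_number_circlepath)
  next
    case False
    with that assms(3) have "p \<notin> cball 0 r" by auto
    then have "winding_number (circlepath 0 r) p = 0"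
      using assms(1) by (intro winding_number_zero_outside[of _ "cball 0 r"]) auto
    then show ?thesis using False by simp
  qed
  then have "(\<Sum>p\<in>Z. winding_number (circlepath 0 r) p * c p)
      = (\<Sum>p\<in>Z. if p \<in> ball 0 r then c p else 0)"
    by (intro sum.cong) auto
  also have "\<dots> = (\<Sum>p\<in>Z \<inter> ball 0 r. c p)"
    by (simp add: sum.inter_restrict assms(2))
  finally show ?thesis .
qed

lemma Rouche_zorder_sum_ball:
  fixes G p :: "complex \<Rightarrow> complex"
  assumes G: "G holomorphic_on UNIV" and p: "p holomorphic_on UNIV" and r: "r > 0"
    and less: "\<forall>z\<in>sphere 0 r. norm (p z) < norm (G z)"
  shows "(\<Sum>z\<in>{z\<in>ball 0 r. G z + p z = 0}. zorder (\<lambda>z. G z + p z) z)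
       = (\<Sum>z\<in>{z\<in>ball 0 r. G z = 0}. zorder G z)"
proof -
  define s where "s = ball (0::complex) (r + 1)"
  have nz: "G z \<noteq> 0" "G z + p z \<noteq> 0" if "z \<in> sphere 0 r" for z
  proof -
    have "norm (p z) < norm (G z)" using less that by blast
    then show "G z \<noteq> 0" "G z + p z \<noteq> 0"
      by (auto simp: add_eq_0_iff)
  qed
  have r_sphere: "complex_of_real r \<in> sphere 0 r" using r by simp
  have Gp: "(\<lambda>z. G z + p z) holomorphic_on UNIV" using G p by (intro holomorphic_intros)
  have fin: "finite {z\<in>s. G z + p z = 0}" "finite {z\<in>s. G z = 0}"
    unfolding s_def
    by (intro entire_finite_zeros[OF Gp nz(2)[OF r_sphere]] entire_finite_zeros[OF G nz(1)[OF r_sphere]]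
        bounded_ball)+
  have disj: "{z\<in>s. G z + p z = 0} \<inter> sphere 0 r = {}" "{z\<in>s. G z = 0} \<inter> sphere 0 r = {}"
    using nz by blast+
  have inter: "{z\<in>s. H z = 0} \<inter> ball 0 r = {z\<in>ball 0 r. H z = 0}" for H :: "complex \<Rightarrow> complex"
    by (auto simp: s_def)
  have "(of_int (\<Sum>z\<in>{z\<in>ball 0 r. G z + p z = 0}. zorder (\<lambda>z. G z + p z) z) :: complex)
      = (\<Sum>z\<in>{z\<in>s. G z + p z = 0}. winding_number (circlepath 0 r) z * of_int (zorder (\<lambda>z. G z + p z) z))"
    using sum_winding_number_circlepath[OF r fin(1) disj(1)] by (simp only: inter of_int_sum)
  also have "\<dots> = (\<Sum>z\<in>{z\<in>s. G z = 0}. winding_number (circlepath 0 r) z * of_int (zorder G z))"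
  proof (rule Rouche_theorem[OF _ _ fin])
    show "\<forall>z. z \<notin> s \<longrightarrow> winding_number (circlepath 0 r) z = 0"
      using r by (auto simp: s_def intro!: winding_number_zero_outside[of _ "cball 0 r"])
  qed (use G p r less in \<open>auto simp: s_def intro: holomorphic_on_subset\<close>)
  also have "\<dots> = of_int (\<Sum>z\<in>{z\<in>ball 0 r. G z = 0}. zorder G z)"
    using sum_winding_number_circlepath[OF r fin(2) disj(2)] by (simp only: inter of_int_sum)
  finally show ?thesis by (simp only: of_int_eq_iff)
qed

lemma subset_eq_if_weight_sums_eq:
  fixes w :: "'a \<Rightarrow> int" and mu :: "'a \<Rightarrow> nat"
  assumes "finite Z" "D \<subseteq> Z" "\<forall>z\<in>Z. 0 < w z" "\<forall>d\<in>D. int (mu d) \<le> w d"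
    and "(\<Sum>z\<in>Z. w z) = (\<Sum>d\<in>D. int (mu d))"
  shows "Z = D"
proof (rule ccontr)
  assume "Z \<noteq> D"
  then obtain y where y: "y \<in> Z - D" using assms(2) by auto
  have "(\<Sum>z\<in>Z. w z) = (\<Sum>z\<in>D. w z) + (\<Sum>z\<in>Z - D. w z)"
    using assms(1,2) by (metis add.commute sum.subset_diff)
  moreover have "(\<Sum>d\<in>D. int (mu d)) \<le> (\<Sum>z\<in>D. w z)"
    using assms(4) by (intro sum_mono) auto
  moreover have "0 < (\<Sum>z\<in>Z - D. w z)"
    using assms(1,3) y by (intro sum_pos2[of _ y]) auto
  ultimately show False using assms(5) by linarith
qed

lemma Rouche_zero_set_eq:
  fixes G p :: "complex \<Rightarrow> complex" and mu :: "complex \<Rightarrow> nat"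
  assumes G: "G holomorphic_on UNIV" and p: "p holomorphic_on UNIV" and r: "r > 0"
    and less: "\<forall>z\<in>sphere 0 r. norm (p z) < norm (G z)"
    and D: "D \<subseteq> ball 0 r" "\<forall>d\<in>D. 0 < mu d \<and> vanishes_to_order (mu d) (\<lambda>z. G z + p z) d"
    and sums: "(\<Sum>d\<in>D. int (mu d)) = (\<Sum>z\<in>{z\<in>ball 0 r. G z = 0}. zorder G z)"
  shows "{z\<in>ball 0 r. G z + p z = 0} = D"
proof (rule subset_eq_if_weight_sums_eq)
  define z1 where "z1 = complex_of_real r"
  have "z1 \<in> sphere 0 r" using r by (simp add: z1_def)
  then have "norm (p z1) < norm (G z1)" using less by blast
  then have z1: "G z1 + p z1 \<noteq> 0" by (auto simp: add_eq_0_iff)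
  have Gp: "(\<lambda>z. G z + p z) holomorphic_on UNIV" using G p by (intro holomorphic_intros)
  show "finite {z\<in>ball 0 r. G z + p z = 0}"
    by (rule entire_finite_zeros[OF Gp z1]) simp
  show "D \<subseteq> {z\<in>ball 0 r. G z + p z = 0}"
    using D vanishes_to_order_imp_zero[of _ "\<lambda>z. G z + p z"] by auto
  show "\<forall>z\<in>{z\<in>ball 0 r. G z + p z = 0}. 0 < zorder (\<lambda>z. G z + p z) z"
    using zorder_pos_entire[OF Gp z1] by auto
  show "\<forall>d\<in>D. int (mu d) \<le> zorder (\<lambda>z. G z + p z) d"
    using zorder_ge_if_vanishes_to_order[OF Gp z1] D(2) by auto
  show "(\<Sum>z\<in>{z\<in>ball 0 r. G z + p z = 0}. zorder (\<lambda>z. G z + p z) z) = (\<Sum>d\<in>D. int (mu d))"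
    using Rouche_zorder_sum_ball[OF G p r less] sums by simp
qed

section \<open>Taylor polynomials\<close>

definition taylor_poly :: "nat \<Rightarrow> (complex \<Rightarrow> complex) \<Rightarrow> complex \<Rightarrow> complex poly" where
  "taylor_poly m \<phi> w = (\<Sum>j<m. smult ((deriv ^^ j) \<phi> w / fact j) ([:-w, 1:] ^ j))"

lemma degree_taylor_poly: "degree (taylor_poly m \<phi> w) \<le> m"
  unfolding taylor_poly_def
proof (rule degree_sum_le)
  fix j assume "j \<in> {..<m}"
  then show "degree (smult ((deriv ^^ j) \<phi> w / fact j) ([:-w, 1:] ^ j)) \<le> m"
    by (metis degree_linear_power degree_smult_le lessThan_iff less_imp_le order.trans)
qed simp

lemma poly_taylor_poly:
  "poly (taylor_poly m \<phi> w) z = (\<Sum>j<m. (deriv ^^ j) \<phi> w / fact j * (z - w) ^ j)"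
  by (simp add: taylor_poly_def poly_sum poly_power)

lemma higher_deriv_sum_lessThan:
  fixes f :: "nat \<Rightarrow> complex \<Rightarrow> complex"
  assumes "\<And>i. f i holomorphic_on UNIV"
  shows "(deriv ^^ j) (\<lambda>z. \<Sum>i<m. f i z) x = (\<Sum>i<m. (deriv ^^ j) (f i) x)"
proof (induction m)
  case (Suc m)
  have "(deriv ^^ j) (\<lambda>z. \<Sum>i<Suc m. f i z) x = (deriv ^^ j) (\<lambda>z. (\<Sum>i<m. f i z) + f m z) x"
    by simp
  also have "\<dots> = (deriv ^^ j) (\<lambda>z. \<Sum>i<m. f i z) x + (deriv ^^ j) (f m) x"
    by (rule higher_deriv_add[of _ UNIV]) (auto intro!: holomorphic_intros assms)
  finally show ?case using Suc by simp
qed (simp add: higher_deriv_const)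

lemma higher_deriv_power_at_center:
  "(deriv ^^ j) (\<lambda>z. (z - w) ^ i) w = (if i = j then fact j else (0::complex))"
proof (cases "i < j")
  case True
  then have "Suc i - j = 0" by simp
  then show ?thesis using True by (simp add: higher_deriv_power pochhammer_0_left)
qed (auto simp: higher_deriv_power pochhammer_fact)

lemma higher_deriv_taylor_poly:
  assumes "j < m"
  shows "(deriv ^^ j) (poly (taylor_poly m \<phi> w)) w = (deriv ^^ j) \<phi> w"
proof -
  define c where "c i = (deriv ^^ i) \<phi> w / fact i" for i
  have "poly (taylor_poly m \<phi> w) = (\<lambda>z. \<Sum>i<m. c i * (z - w) ^ i)"
    by (rule ext) (simp add: poly_taylor_poly c_def)
  then have "(deriv ^^ j) (poly (taylor_poly m \<phi> w)) w = (deriv ^^ j) (\<lambda>z. \<Sum>i<m. c i * (z - w) ^ i) w"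
    by simp
  also have "\<dots> = (\<Sum>i<m. c i * (deriv ^^ j) (\<lambda>z. (z - w) ^ i) w)"
    by (subst higher_deriv_sum_lessThan)
       (auto intro!: holomorphic_intros sum.cong higher_deriv_cmult[of _ UNIV])
  also have "\<dots> = (\<Sum>i<m. if i = j then fact j * c j else 0)"
    by (intro sum.cong) (auto simp: higher_deriv_power_at_center)
  also have "\<dots> = fact j * c j"
    using assms by simp
  finally show ?thesis by (simp add: c_def)
qed

lemma vanishes_to_order_taylor_poly:
  assumes "\<phi> holomorphic_on U" "open U" "w \<in> U"
  shows "vanishes_to_order m (\<lambda>z. poly (taylor_poly m \<phi> w) z - \<phi> z) w"
  unfolding vanishes_to_order_def
proof (intro allI impI)
  fix j assume "j < m"
  have "(deriv ^^ j) (\<lambda>z. poly (taylor_poly m \<phi> w) z - \<phi> z) w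
      = (deriv ^^ j) (poly (taylor_poly m \<phi> w)) w - (deriv ^^ j) \<phi> w"
    by (rule higher_deriv_diff[OF _ assms]) (intro holomorphic_intros)
  then show "(deriv ^^ j) (\<lambda>z. poly (taylor_poly m \<phi> w) z - \<phi> z) w = 0"
    using higher_deriv_taylor_poly[OF \<open>j < m\<close>] by simp
qed

lemma norm_taylor_coeff_le:
  fixes \<phi> :: "complex \<Rightarrow> complex"
  assumes hol: "\<phi> holomorphic_on ball z0 \<rho>1" and "0 \<le> K"
    and bound: "\<forall>z\<in>ball z0 \<rho>1. norm (\<phi> z) \<le> K * norm (z - z0) ^ m"
    and \<rho>: "0 < \<rho>" "2 * \<rho> \<le> \<rho>1" and w: "w \<in> ball z0 \<rho>" and "j \<le> m"
  shows "norm ((deriv ^^ j) \<phi> w / fact j) \<le> K * 2 ^ m * \<rho> ^ (m - j)"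
proof -
  have near: "norm (x - z0) < 2 * \<rho>" if "x \<in> cball w \<rho>" for x
  proof -
    have "norm (x - z0) \<le> norm (x - w) + norm (w - z0)"
      using norm_triangle_ineq[of "x - w" "w - z0"] by simp
    also have "\<dots> < 2 * \<rho>"
      using that w by (simp add: dist_norm norm_minus_commute)
    finally show ?thesis .
  qed
  have sub: "cball w \<rho> \<subseteq> ball z0 \<rho>1"
    using near \<rho>(2) by (force simp: dist_norm norm_minus_commute)
  have "norm ((deriv ^^ j) \<phi> w) \<le> fact j * (K * (2 * \<rho>) ^ m) / \<rho> ^ j"
  proof (rule Cauchy_inequality)
    show "\<phi> holomorphic_on ball w \<rho>"
      using hol sub ball_subset_cball holomorphic_on_subset by blast
    show "continuous_on (cball w \<rho>) \<phi>"
      using hol sub holomorphic_on_imp_continuous_on holomorphic_on_subset by blast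
    fix x assume "norm (w - x) = \<rho>"
    then have x: "x \<in> cball w \<rho>" by (simp add: dist_norm)
    have "norm (\<phi> x) \<le> K * norm (x - z0) ^ m"
      using bound sub x by blast
    also have "\<dots> \<le> K * (2 * \<rho>) ^ m"
      using near[OF x] \<open>0 \<le> K\<close> by (intro mult_left_mono power_mono) auto
    finally show "norm (\<phi> x) \<le> K * (2 * \<rho>) ^ m" .
  qed (rule \<rho>(1))
  also have "\<dots> = fact j * (K * 2 ^ m * \<rho> ^ (m - j))"
    using \<rho>(1) \<open>j \<le> m\<close> by (simp add: power_mult_distrib power_diff)
  finally show ?thesis
    by (simp add: norm_divide divide_le_eq mult.commute)
qed

lemma norm_poly_taylor_poly_le:
  fixes \<phi> :: "complex \<Rightarrow> complex"
  assumes hol: "\<phi> holomorphic_on ball z0 \<rho>1" and "0 \<le> K"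
    and bound: "\<forall>z\<in>ball z0 \<rho>1. norm (\<phi> z) \<le> K * norm (z - z0) ^ m"
    and \<rho>: "0 < \<rho>" "2 * \<rho> \<le> \<rho>1" "\<rho> \<le> 1" and w: "w \<in> ball z0 \<rho>"
    and L: "norm (z - w) \<le> L" "1 \<le> L"
  shows "norm (poly (taylor_poly m \<phi> w) z) \<le> real m * (K * 2 ^ m * L ^ m) * \<rho>"
proof -
  have "norm (poly (taylor_poly m \<phi> w) z)
      \<le> (\<Sum>j<m. norm ((deriv ^^ j) \<phi> w / fact j) * norm (z - w) ^ j)"
    unfolding poly_taylor_poly
    by (rule order_trans[OF norm_sum]) (simp add: norm_mult norm_divide norm_power)
  also have "\<dots> \<le> (\<Sum>j<m. (K * 2 ^ m * \<rho>) * L ^ m)"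
  proof (rule sum_mono)
    fix j assume "j \<in> {..<m}"
    then have j: "j < m" by simp
    have "norm ((deriv ^^ j) \<phi> w / fact j) \<le> K * 2 ^ m * \<rho> ^ (m - j)"
      using j by (intro norm_taylor_coeff_le[OF hol \<open>0 \<le> K\<close> bound \<rho>(1,2) w]) simp
    also have "\<dots> \<le> K * 2 ^ m * \<rho> ^ 1"
      using j \<rho> \<open>0 \<le> K\<close> by (intro mult_left_mono power_decreasing) auto
    finally have c: "norm ((deriv ^^ j) \<phi> w / fact j) \<le> K * 2 ^ m * \<rho>" by simp
    have "norm (z - w) ^ j \<le> L ^ j" using L(1) by (intro power_mono) auto
    also have "\<dots> \<le> L ^ m" using L(2) j by (intro power_increasing) auto
    finally show "norm ((deriv ^^ j) \<phi> w / fact j) * norm (z - w) ^ j \<le> (K * 2 ^ m * \<rho>) * L ^ m"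
      using c \<open>0 \<le> K\<close> \<rho>(1) by (intro mult_mono) auto
  qed
  also have "\<dots> = real m * (K * 2 ^ m * L ^ m) * \<rho>" by simp
  finally show ?thesis .
qed

lemma small_taylor_poly_near_zero:
  fixes \<phi> :: "complex \<Rightarrow> complex"
  assumes hol: "\<phi> holomorphic_on ball z0 \<rho>1" and "0 < \<rho>1" and "0 \<le> K"
    and bound: "\<forall>z\<in>ball z0 \<rho>1. norm (\<phi> z) \<le> K * norm (z - z0) ^ m"
    and "0 < \<epsilon>"
  shows "\<exists>\<rho>>0. \<rho> \<le> \<rho>1 \<and> (\<forall>w\<in>ball z0 \<rho>. \<forall>z\<in>cball 0 Rb. norm (poly (taylor_poly m \<phi> w) z) \<le> \<epsilon>)"
proof -
  define L where "L = \<bar>Rb\<bar> + norm z0 + 1"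
  define C where "C = real m * (K * 2 ^ m * L ^ m)"
  define \<rho> where "\<rho> = min (\<rho>1 / 2) (min 1 (\<epsilon> / (C + 1)))"
  have L: "1 \<le> L" by (simp add: L_def)
  have C: "0 \<le> C" using L \<open>0 \<le> K\<close> by (simp add: C_def)
  have \<rho>: "0 < \<rho>" "2 * \<rho> \<le> \<rho>1" "\<rho> \<le> 1" "C * \<rho> \<le> \<epsilon>"
  proof -
    show "0 < \<rho>" "2 * \<rho> \<le> \<rho>1" "\<rho> \<le> 1"
      using assms(2,5) C by (auto simp: \<rho>_def)
    have "C * \<rho> \<le> C * (\<epsilon> / (C + 1))"
      using C by (intro mult_left_mono) (auto simp: \<rho>_def)
    also have "\<dots> \<le> \<epsilon>"
      using C assms(5) by (simp add: field_simps)
    finally show "C * \<rho> \<le> \<epsilon>" .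
  qed
  have "norm (poly (taylor_poly m \<phi> w) z) \<le> \<epsilon>" if w: "w \<in> ball z0 \<rho>" and z: "z \<in> cball 0 Rb" for w z
  proof -
    have "norm (z - w) \<le> norm z + norm (w - z0) + norm z0"
      using norm_triangle_ineq4[of z w] norm_triangle_ineq[of "w - z0" z0] by simp
    then have "norm (z - w) \<le> L"
      using z w \<rho>(3) by (simp add: L_def dist_norm norm_minus_commute)
    then have "norm (poly (taylor_poly m \<phi> w) z) \<le> C * \<rho>"
      unfolding C_def by (rule norm_poly_taylor_poly_le[OF hol \<open>0 \<le> K\<close> bound \<rho>(1-3) w _ L])
    then show ?thesis using \<rho>(4) by linarith
  qed
  then show ?thesis using \<rho> by (intro exI[of _ \<rho>]) auto
qed

lemma continuous_at_norm_bounded_below: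
  fixes f :: "'a::metric_space \<Rightarrow> 'b::real_normed_vector"
  assumes "continuous (at x) f" "f x \<noteq> 0"
  obtains \<rho> where "0 < \<rho>" "\<forall>y\<in>ball x \<rho>. norm (f x) / 2 \<le> norm (f y)"
proof -
  obtain \<rho> where \<rho>: "0 < \<rho>" "\<forall>y. dist y x < \<rho> \<longrightarrow> dist (f y) (f x) < norm (f x) / 2"
    using assms unfolding continuous_at_eps_delta by (meson half_gt_zero zero_less_norm_iff)
  have "norm (f x) / 2 \<le> norm (f y)" if "y \<in> ball x \<rho>" for y
  proof -
    have "norm (f x) \<le> norm (f y) + dist (f y) (f x)"
      using norm_triangle_sub[of "f x" "f y"] by (simp add: dist_norm norm_minus_commute)
    then show ?thesis using \<rho>(2) that by (fastforce simp: dist_commute)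
  qed
  then show ?thesis using that \<rho>(1) by blast
qed

lemma quotient_bound_near_zero:
  fixes h :: "complex \<Rightarrow> complex" and Q :: "complex poly" and z0 :: complex
  assumes h: "h holomorphic_on UNIV" "h z1 \<noteq> 0" and Q: "poly Q z0 \<noteq> 0"
  obtains \<rho> K where "0 < \<rho>" "0 \<le> K" "\<forall>z\<in>ball z0 \<rho>. poly Q z \<noteq> 0"
    "\<forall>z\<in>ball z0 \<rho>. norm (h z / poly Q z) \<le> K * norm (z - z0) ^ nat (zorder h z0)"
proof -
  define m where "m = nat (zorder h z0)"
  obtain r0 where r0: "0 < r0" "zor_poly h z0 holomorphic_on cball z0 r0"
      "\<forall>z\<in>cball z0 r0. h z = zor_poly h z0 z * (z - z0) ^ m"
    using zorder_exist_zero[OF h(1) open_UNIV connected_UNIV UNIV_I, of z0] h(2)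
    unfolding m_def by blast
  obtain K where K: "0 \<le> K" "\<forall>z\<in>cball z0 r0. norm (zor_poly h z0 z) \<le> K"
    using continuous_on_compact_bound[OF compact_cball holomorphic_on_imp_continuous_on[OF r0(2)]]
    by metis
  define c where "c = norm (poly Q z0) / 2"
  have c: "0 < c" using Q by (simp add: c_def)
  obtain \<rho>2 where \<rho>2: "0 < \<rho>2" "\<forall>z\<in>ball z0 \<rho>2. c \<le> norm (poly Q z)"
    using continuous_at_norm_bounded_below[OF continuous_within_poly Q] unfolding c_def by blast
  define \<rho> where "\<rho> = min r0 \<rho>2"
  have Q_ge: "c \<le> norm (poly Q z)" if "z \<in> ball z0 \<rho>" for z
    using \<rho>2 that by (simp add: \<rho>_def)
  have "norm (h z / poly Q z) \<le> K / c * norm (z - z0) ^ m" if z: "z \<in> ball z0 \<rho>" for z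
  proof -
    have "norm (h z / poly Q z) = norm (h z) / norm (poly Q z)"
      by (simp add: norm_divide)
    also have "\<dots> \<le> K * norm (z - z0) ^ m / c"
    proof (rule frac_le)
      show "norm (h z) \<le> K * norm (z - z0) ^ m"
        using z r0(3) K(2) by (auto simp: \<rho>_def norm_mult norm_power intro!: mult_right_mono)
    qed (use K(1) c Q_ge[OF z] in auto)
    finally show ?thesis by simp
  qed
  moreover have "poly Q z \<noteq> 0" if "z \<in> ball z0 \<rho>" for z
    using Q_ge[OF that] c by auto
  moreover have "0 < \<rho>" "0 \<le> K / c" using r0(1) \<rho>2(1) K(1) c by (auto simp: \<rho>_def)
  ultimately show ?thesis using that unfolding m_def by blast
qed

lemma vanishes_to_order_taylor_correction:
  fixes h \<phi> :: "complex \<Rightarrow> complex" and Q :: "complex poly"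
  assumes "h holomorphic_on U" "\<phi> holomorphic_on U" "open U" "w \<in> U"
    and "\<And>z. z \<in> U \<Longrightarrow> h z = - (poly Q z * \<phi> z)"
  shows "vanishes_to_order m (\<lambda>z. h z + poly (Q * taylor_poly m \<phi> w) z) w"
proof -
  define T where "T = taylor_poly m \<phi> w"
  have "vanishes_to_order m (\<lambda>z. poly Q z * (poly T z - \<phi> z)) w"
    by (rule vanishes_to_order_mult_left[OF _ _ assms(3,4)])
       (use assms(2-4) in \<open>auto intro!: holomorphic_intros vanishes_to_order_taylor_poly simp: T_def\<close>)
  moreover have "vanishes_to_order m (\<lambda>z. h z + poly (Q * T) z) w
      \<longleftrightarrow> vanishes_to_order m (\<lambda>z. poly Q z * (poly T z - \<phi> z)) w"
    by (rule vanishes_to_order_cong[OF _ _ assms(3,4)])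
       (use assms in \<open>auto intro!: holomorphic_intros simp: algebra_simps\<close>)
  ultimately show ?thesis by (simp add: T_def)
qed

text \<open>Near \<open>z0\<close> write \<open>h = - Q * \<phi>\<close> with \<open>\<phi> = O(\<bar>z - z0\<bar>^m)\<close>. For the Taylor polynomial
  \<open>T\<close> of \<open>\<phi>\<close> at \<open>w\<close>, the function \<open>h + Q * T = Q * (T - \<phi>)\<close> vanishes to order \<open>m\<close> at \<open>w\<close>,
  and \<open>T\<close> is small when \<open>w\<close> is close to \<open>z0\<close>.\<close>
lemma exists_poly_moving_zero:
  fixes h :: "complex \<Rightarrow> complex" and Q :: "complex poly" and z0 :: complex and Rb :: real
  defines "m \<equiv> nat (zorder h z0)"
  assumes h: "h holomorphic_on UNIV" "h z1 \<noteq> 0" and Q: "poly Q z0 \<noteq> 0" and "0 < \<epsilon>"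
  shows "\<exists>\<rho>>0. \<forall>w\<in>ball z0 \<rho>. \<exists>T. degree T \<le> m
           \<and> vanishes_to_order m (\<lambda>z. h z + poly (Q * T) z) w
           \<and> (\<forall>z\<in>cball (0::complex) Rb. norm (poly (Q * T) z) \<le> \<epsilon>)"
proof -
  obtain \<rho>1 K where \<rho>1: "0 < \<rho>1" "0 \<le> K" "\<forall>z\<in>ball z0 \<rho>1. poly Q z \<noteq> 0"
      "\<forall>z\<in>ball z0 \<rho>1. norm (h z / poly Q z) \<le> K * norm (z - z0) ^ m"
    using quotient_bound_near_zero[OF h Q] unfolding m_def by blast
  obtain M where M: "0 \<le> M" "\<forall>z\<in>cball (0::complex) Rb. norm (poly Q z) \<le> M"
  proof (rule continuous_on_compact_bound[OF compact_cball])
    show "continuous_on (cball (0::complex) Rb) (poly Q)"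
      by (auto intro: continuous_at_imp_continuous_on continuous_within_poly)
  qed blast
  define \<phi> where "\<phi> z = - h z / poly Q z" for z
  have \<phi>_hol: "\<phi> holomorphic_on ball z0 \<rho>1"
    unfolding \<phi>_def using \<rho>1(3) h(1) by (auto intro!: holomorphic_intros intro: holomorphic_on_subset)
  have \<phi>_bound: "\<forall>z\<in>ball z0 \<rho>1. norm (\<phi> z) \<le> K * norm (z - z0) ^ m"
    using \<rho>1(4) by (simp add: \<phi>_def)
  obtain \<rho> where \<rho>: "0 < \<rho>" "\<rho> \<le> \<rho>1"
      "\<forall>w\<in>ball z0 \<rho>. \<forall>z\<in>cball (0::complex) Rb. norm (poly (taylor_poly m \<phi> w) z) \<le> \<epsilon> / (M + 1)"
    using small_taylor_poly_near_zero[OF \<phi>_hol \<rho>1(1,2) \<phi>_bound, of "\<epsilon> / (M + 1)" Rb]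
      M(1) \<open>0 < \<epsilon>\<close> by auto
  have "\<exists>T. degree T \<le> m \<and> vanishes_to_order m (\<lambda>z. h z + poly (Q * T) z) w
           \<and> (\<forall>z\<in>cball (0::complex) Rb. norm (poly (Q * T) z) \<le> \<epsilon>)" if w: "w \<in> ball z0 \<rho>" for w
  proof (intro exI conjI)
    define T where "T = taylor_poly m \<phi> w"
    show "degree T \<le> m" by (simp add: T_def degree_taylor_poly)
    show "vanishes_to_order m (\<lambda>z. h z + poly (Q * T) z) w"
      unfolding T_def
    proof (rule vanishes_to_order_taylor_correction[OF _ \<phi>_hol open_ball])
      show "h holomorphic_on ball z0 \<rho>1" using h(1) holomorphic_on_subset by blast
      show "w \<in> ball z0 \<rho>1" using w \<rho>(2) by auto
      show "h z = - (poly Q z * \<phi> z)" if "z \<in> ball z0 \<rho>1" for z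
        using \<rho>1(3) that by (simp add: \<phi>_def)
    qed
    show "\<forall>z\<in>cball (0::complex) Rb. norm (poly (Q * T) z) \<le> \<epsilon>"
    proof
      fix z assume z: "z \<in> cball (0::complex) Rb"
      have "norm (poly Q z) \<le> M" "norm (poly T z) \<le> \<epsilon> / (M + 1)"
        using M(2) \<rho>(3) z w by (auto simp: T_def)
      then have "norm (poly (Q * T) z) \<le> M * (\<epsilon> / (M + 1))"
        unfolding poly_mult norm_mult using M(1) by (intro mult_mono) auto
      also have "\<dots> \<le> \<epsilon>" using M(1) \<open>0 < \<epsilon>\<close> by (simp add: field_simps)
      finally show "norm (poly (Q * T) z) \<le> \<epsilon>" .
    qed
  qed
  then show ?thesis using \<rho>(1) by blast
qed

section \<open>Small polynomials in the Frechet space\<close>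

lemma
  assumes "frechet_entire_space F nrm"
  shows frechet_entire_space_holomorphic: "f \<in> F \<Longrightarrow> f holomorphic_on UNIV"
    and frechet_entire_space_add: "f \<in> F \<Longrightarrow> g \<in> F \<Longrightarrow> (\<lambda>z. f z + g z) \<in> F"
    and frechet_entire_space_cmult: "f \<in> F \<Longrightarrow> (\<lambda>z. c * f z) \<in> F"
    and frechet_entire_space_poly: "poly p \<in> F"
    and frechet_entire_space_nrm_nonneg: "f \<in> F \<Longrightarrow> 0 \<le> nrm j f"
    and frechet_entire_space_nrm_cmult: "f \<in> F \<Longrightarrow> nrm j (\<lambda>z. c * f z) = norm c * nrm j f"
    and frechet_entire_space_nrm_add:
      "f \<in> F \<Longrightarrow> g \<in> F \<Longrightarrow> nrm j (\<lambda>z. f z + g z) \<le> nrm j f + nrm j g"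
  using assms unfolding frechet_entire_space_def by (elim conjE; simp)+

lemma frechet_entire_space_diff:
  assumes "frechet_entire_space F nrm" "f \<in> F" "g \<in> F"
  shows "(\<lambda>z. f z - g z) \<in> F"
  using frechet_entire_space_add[OF assms(1,2) frechet_entire_space_cmult[OF assms(1,3), of "-1"]]
  by simp

lemma dF_summable:
  assumes "frechet_entire_space F nrm" "f \<in> F" "g \<in> F"
  shows "summable (\<lambda>j. (1/2::real) ^ j * min 1 (nrm j (\<lambda>z. f z - g z)))"
proof (rule summable_comparison_test'[of "\<lambda>j. (1/2::real) ^ j" 0])
  show "summable (\<lambda>j. (1/2::real) ^ j)" by (rule summable_geometric) simp
  fix j
  have "0 \<le> nrm j (\<lambda>z. f z - g z)"
    by (rule frechet_entire_space_nrm_nonneg[OF assms(1) frechet_entire_space_diff[OF assms]])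
  then show "norm ((1/2::real) ^ j * min 1 (nrm j (\<lambda>z. f z - g z))) \<le> (1/2) ^ j"
    by (simp add: abs_mult min_def)
qed

lemma dF_self:
  assumes "frechet_entire_space F nrm" "g \<in> F"
  shows "dF nrm g g = 0"
proof -
  have "nrm j (\<lambda>z. 0 * g z) = 0" for j
    using frechet_entire_space_nrm_cmult[OF assms, of j 0] by simp
  then show ?thesis by (simp add: dF_def)
qed

lemma dF_triangle:
  assumes F: "frechet_entire_space F nrm" and "f \<in> F" "g \<in> F" "h \<in> F"
  shows "dF nrm f h \<le> dF nrm f g + dF nrm g h"
proof -
  have fg: "(\<lambda>z. f z - g z) \<in> F" and gh: "(\<lambda>z. g z - h z) \<in> F"
    using assms by (auto intro: frechet_entire_space_diff)
  have term_le: "min 1 (nrm j (\<lambda>z. f z - h z))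
      \<le> min 1 (nrm j (\<lambda>z. f z - g z)) + min 1 (nrm j (\<lambda>z. g z - h z))" for j
    using frechet_entire_space_nrm_add[OF F fg gh, of j]
      frechet_entire_space_nrm_nonneg[OF F fg, of j] frechet_entire_space_nrm_nonneg[OF F gh, of j]
    by simp
  have "dF nrm f h \<le> (\<Sum>j. (1/2::real) ^ j * min 1 (nrm j (\<lambda>z. f z - g z))
                         + (1/2::real) ^ j * min 1 (nrm j (\<lambda>z. g z - h z)))"
    unfolding dF_def
  proof (rule suminf_le)
    show "(1/2) ^ j * min 1 (nrm j (\<lambda>z. f z - h z))
        \<le> (1/2) ^ j * min 1 (nrm j (\<lambda>z. f z - g z)) + (1/2) ^ j * min 1 (nrm j (\<lambda>z. g z - h z))" for j
      using term_le[of j] by (simp add: distrib_left[symmetric])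
  qed (intro summable_add dF_summable[OF F] assms)+
  also have "\<dots> = dF nrm f g + dF nrm g h"
    unfolding dF_def by (rule suminf_add[symmetric]) (intro dF_summable[OF F] assms)+
  finally show ?thesis .
qed

lemma dF_le_partial_sum:
  assumes F: "frechet_entire_space F nrm" and "f \<in> F" "g \<in> F"
  shows "dF nrm f g \<le> (\<Sum>j<J. nrm j (\<lambda>z. f z - g z)) + 2 * (1/2) ^ J"
proof -
  define t where "t j = (1/2::real) ^ j * min 1 (nrm j (\<lambda>z. f z - g z))" for j
  have nonneg: "0 \<le> nrm j (\<lambda>z. f z - g z)" for j
    using frechet_entire_space_nrm_nonneg[OF F frechet_entire_space_diff[OF assms]] .
  have sm: "summable t" unfolding t_def by (rule dF_summable[OF assms])
  have "dF nrm f g = (\<Sum>n. t (n + J)) + (\<Sum>j<J. t j)"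
    unfolding dF_def t_def[symmetric] by (rule suminf_split_initial_segment[OF sm])
  also have "(\<Sum>n. t (n + J)) \<le> (\<Sum>n. (1/2) ^ J * (1/2::real) ^ n)"
  proof (rule suminf_le)
    show "t (n + J) \<le> (1/2) ^ J * (1/2) ^ n" for n
      using nonneg[of "n + J"] by (simp add: t_def power_add mult_left_le)
  qed (use sm in \<open>auto intro: summable_ignore_initial_segment summable_mult summable_geometric\<close>)
  also have "\<dots> = 2 * (1/2) ^ J"
    using suminf_mult[OF summable_geometric[of "1/2::real"], of "(1/2) ^ J"] suminf_geometric[of "1/2::real"]
    by simp
  also have "(\<Sum>j<J. t j) \<le> (\<Sum>j<J. nrm j (\<lambda>z. f z - g z))"
  proof (rule sum_mono)
    show "t j \<le> nrm j (\<lambda>z. f z - g z)" for j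
    proof -
      have "t j \<le> min 1 (nrm j (\<lambda>z. f z - g z))"
        using nonneg[of j] unfolding t_def by (intro mult_left_le_one_le) (auto intro: power_le_one)
      then show ?thesis by linarith
    qed
  qed
  finally show ?thesis by linarith
qed

lemma frechet_entire_space_power:
  assumes "frechet_entire_space F nrm"
  shows "(\<lambda>z. z ^ i) \<in> F"
proof -
  have "poly (monom 1 i) = (\<lambda>z::complex. z ^ i)" by (rule ext) (simp add: poly_monom)
  then show ?thesis using frechet_entire_space_poly[OF assms, of "monom 1 i"] by simp
qed

lemma higher_deriv_poly: "(deriv ^^ i) (poly p) = poly ((pderiv ^^ i) (p :: complex poly))"
proof (induction i)
  case (Suc i)
  have "deriv (poly ((pderiv ^^ i) p)) = poly (pderiv ((pderiv ^^ i) p))"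
    by (intro ext DERIV_imp_deriv poly_DERIV)
  then show ?case using Suc by simp
qed simp

lemma norm_coeff_le_sphere_bound:
  fixes p :: "complex poly"
  assumes "\<forall>z\<in>sphere 0 1. norm (poly p z) \<le> \<eta>"
  shows "norm (coeff p i) \<le> \<eta>"
proof -
  have "norm ((deriv ^^ i) (poly p) 0) \<le> fact i * \<eta> / 1 ^ i"
    by (rule Cauchy_inequality) (use assms in \<open>auto intro!: holomorphic_intros continuous_intros\<close>)
  moreover have "(deriv ^^ i) (poly p) 0 = fact i * coeff p i"
    by (simp add: higher_deriv_poly poly_0_coeff_0 coeff_higher_pderiv pochhammer_fact)
  ultimately show ?thesis by (simp add: norm_mult)
qed

lemma nrm_sum_monomials_le:
  assumes F: "frechet_entire_space F nrm"
  shows "(\<lambda>z. \<Sum>i\<le>n. c i * z ^ i) \<in> F \<and>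
         nrm j (\<lambda>z. \<Sum>i\<le>n. c i * z ^ i) \<le> (\<Sum>i\<le>n. norm (c i) * nrm j (\<lambda>z. z ^ i))"
proof (induction n)
  case 0
  show ?case
    using frechet_entire_space_cmult[OF F frechet_entire_space_power[OF F, of 0], of "c 0"]
      frechet_entire_space_nrm_cmult[OF F frechet_entire_space_power[OF F, of 0], of j "c 0"]
    by simp
next
  case (Suc n)
  define q where "q z = (\<Sum>i\<le>n. c i * z ^ i)" for z
  define t where "t z = c (Suc n) * z ^ Suc n" for z
  have t: "t \<in> F" "nrm j t = norm (c (Suc n)) * nrm j (\<lambda>z. z ^ Suc n)"
    unfolding t_def
    by (simp_all only: frechet_entire_space_cmult[OF F frechet_entire_space_power[OF F]]
        frechet_entire_space_nrm_cmult[OF F frechet_entire_space_power[OF F]])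
  have q: "q \<in> F" "nrm j q \<le> (\<Sum>i\<le>n. norm (c i) * nrm j (\<lambda>z. z ^ i))"
    using Suc by (simp_all add: q_def[abs_def])
  have "(\<lambda>z. \<Sum>i\<le>Suc n. c i * z ^ i) = (\<lambda>z. q z + t z)"
    by (simp add: q_def t_def)
  then show ?case
    using frechet_entire_space_add[OF F q(1) t(1)] frechet_entire_space_nrm_add[OF F q(1) t(1), of j]
      q(2) t(2) by simp
qed

lemma nrm_poly_le:
  assumes F: "frechet_entire_space F nrm" and "degree p \<le> N"
    and "\<forall>z\<in>sphere 0 1. norm (poly p z) \<le> \<eta>"
  shows "nrm j (poly p) \<le> \<eta> * (\<Sum>i\<le>N. nrm j (\<lambda>z. z ^ i))"
proof -
  have "poly p = (\<lambda>z. \<Sum>i\<le>N. coeff p i * z ^ i)"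
    using assms(2) by (intro ext) (simp add: poly_altdef, rule sum.mono_neutral_left, auto simp: coeff_eq_0)
  then have "nrm j (poly p) \<le> (\<Sum>i\<le>N. norm (coeff p i) * nrm j (\<lambda>z. z ^ i))"
    using nrm_sum_monomials_le[OF F, of "coeff p" N j] by simp
  also have "\<dots> \<le> (\<Sum>i\<le>N. \<eta> * nrm j (\<lambda>z. z ^ i))"
  proof (intro sum_mono mult_right_mono norm_coeff_le_sphere_bound assms(3))
    show "0 \<le> nrm j (\<lambda>z. z ^ i)" for i
      by (rule frechet_entire_space_nrm_nonneg[OF F frechet_entire_space_power[OF F]])
  qed
  finally show ?thesis by (simp add: sum_distrib_left)
qed

lemma dF_add_small_poly:
  assumes F: "frechet_entire_space F nrm" and "0 < \<delta>"
  obtains \<eta> where "0 < \<eta>" "\<And>p g. degree p \<le> N \<Longrightarrow> g \<in> F \<Longrightarrow> \<forall>z\<in>sphere 0 1. norm (poly p z) \<le> \<eta>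
      \<Longrightarrow> dF nrm g (\<lambda>z. g z + poly p z) < \<delta>"
proof -
  obtain J where J: "(1/2::real) ^ J < \<delta> / 4"
    using real_arch_pow_inv[of "\<delta> / 4" "1/2::real"] assms(2) by auto
  define S where "S = (\<Sum>j<J. \<Sum>i\<le>N. nrm j (\<lambda>z. z ^ i))"
  have S: "0 \<le> S"
    unfolding S_def
    by (intro sum_nonneg frechet_entire_space_nrm_nonneg[OF F frechet_entire_space_power[OF F]])
  define \<eta> where "\<eta> = \<delta> / (2 * (S + 1))"
  have \<eta>: "0 < \<eta>" "\<eta> * S < \<delta> / 2"
    using S assms(2) by (auto simp: \<eta>_def field_simps)
  have "dF nrm g (\<lambda>z. g z + poly p z) < \<delta>"
    if p: "degree p \<le> N" "\<forall>z\<in>sphere 0 1. norm (poly p z) \<le> \<eta>" and g: "g \<in> F" for p g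
  proof -
    have gp: "(\<lambda>z. g z + poly p z) \<in> F"
      by (rule frechet_entire_space_add[OF F g frechet_entire_space_poly[OF F]])
    have "nrm j (\<lambda>z. g z - (g z + poly p z)) = nrm j (poly p)" for j
      using frechet_entire_space_nrm_cmult[OF F frechet_entire_space_poly[OF F], of j "-1" p]
      by simp
    then have "dF nrm g (\<lambda>z. g z + poly p z) \<le> (\<Sum>j<J. nrm j (poly p)) + 2 * (1/2) ^ J"
      using dF_le_partial_sum[OF F g gp, of J] by simp
    also have "(\<Sum>j<J. nrm j (poly p)) \<le> \<eta> * S"
      unfolding S_def sum_distrib_left
      using nrm_poly_le[OF F p] by (intro sum_mono) (simp add: sum_distrib_left)
    finally show ?thesis using \<eta>(2) J by linarith
  qed
  then show ?thesis using that \<eta>(1) by blast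
qed

lemma FA_add_poly:
  assumes F: "frechet_entire_space F nrm" and g: "g \<in> FA F f A"
    and P: "\<forall>a\<in>A. vanishes_to_order 2 (poly P) a"
  shows "(\<lambda>z. g z + poly P z) \<in> FA F f A"
  unfolding FA_def
proof (intro CollectI conjI ballI)
  have gF: "g \<in> F" using g by (simp add: FA_def)
  show "(\<lambda>z. g z + poly P z) \<in> F"
    by (rule frechet_entire_space_add[OF F gF frechet_entire_space_poly[OF F]])
  fix a assume a: "a \<in> A"
  have P0: "poly P a = 0" "deriv (poly P) a = 0"
    using vanishes_to_order_2D P a by blast+
  show "g a + poly P a = f a" using g a P0 by (simp add: FA_def)
  have "g field_differentiable at a"
    using frechet_entire_space_holomorphic[OF F gF] holomorphic_on_imp_differentiable_at by blast
  moreover have "poly P field_differentiable at a"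
    unfolding field_differentiable_def using poly_DERIV by blast
  ultimately have "deriv (\<lambda>z. g z + poly P z) a = deriv g a + deriv (poly P) a"
    by (rule deriv_add)
  then show "deriv (\<lambda>z. g z + poly P z) a = deriv f a" using g a P0 by (simp add: FA_def)
qed

section \<open>Moving a point of the preimage into \<open>E\<close>\<close>

definition value_multiplicity :: "(complex \<Rightarrow> complex) \<Rightarrow> complex \<Rightarrow> nat" where
  "value_multiplicity g s = nat (zorder (\<lambda>z. g z - g s) s)"

lemma
  assumes "g holomorphic_on UNIV" "g z1 \<noteq> g s"
  shows value_multiplicity_pos: "0 < value_multiplicity g s"
    and zorder_eq_value_multiplicity: "zorder (\<lambda>z. g z - g s) s = int (value_multiplicity g s)"
    and vanishes_to_order_value_multiplicity:
      "vanishes_to_order (value_multiplicity g s) (\<lambda>z. g z - g s) s"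
proof -
  have hol: "(\<lambda>z. g z - g s) holomorphic_on UNIV" using assms(1) by (intro holomorphic_intros)
  have "0 < zorder (\<lambda>z. g z - g s) s"
    using zorder_pos_entire[OF hol, of z1] assms(2) by simp
  then show "0 < value_multiplicity g s" "zorder (\<lambda>z. g z - g s) s = int (value_multiplicity g s)"
    by (auto simp: value_multiplicity_def)
  show "vanishes_to_order (value_multiplicity g s) (\<lambda>z. g z - g s) s"
    unfolding value_multiplicity_def using vanishes_to_order_zorder[OF hol, of z1] assms(2) by simp
qed

lemma finite_preimage_ball:
  assumes "g holomorphic_on UNIV" "finite B" "0 < r" "\<forall>z\<in>sphere 0 r. g z \<notin> B"
  shows "finite {z\<in>ball 0 r. g z \<in> B}"
proof -
  have "g (of_real r) \<notin> B" using assms(3,4) by simp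
  then have "finite {z\<in>ball 0 r. g z - b = 0}" if "b \<in> B" for b
    using that assms(1) by (intro entire_finite_zeros[of _ "of_real r"]) (auto intro!: holomorphic_intros)
  then have "finite (\<Union>b\<in>B. {z\<in>ball 0 r. g z - b = 0})"
    using assms(2) by blast
  then show ?thesis by (rule finite_subset[rotated]) auto
qed

lemma sum_replace_point:
  fixes m :: "'a \<Rightarrow> 'b::comm_monoid_add"
  assumes "finite Z" "z0 \<in> Z" "w \<notin> Z"
  shows "(\<Sum>d\<in>insert w (Z - {z0}). (m(w := m z0)) d) = (\<Sum>z\<in>Z. m z)"
proof -
  have "(\<Sum>d\<in>Z - {z0}. (m(w := m z0)) d) = (\<Sum>d\<in>Z - {z0}. m d)"
    using assms(3) by (intro sum.cong) auto
  then show ?thesis using assms by (simp add: sum.remove)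
qed

text \<open>By Rouche's theorem \<open>g - b + p\<close> and \<open>g - b\<close> have equally many zeros in the disc, counted
  with multiplicity. If the prescribed zeros \<open>D\<close> of \<open>g - b + p\<close> already account for all of them,
  there are no others.\<close>
lemma Rouche_level_set_eq:
  fixes g p :: "complex \<Rightarrow> complex" and mu :: "complex \<Rightarrow> nat"
  assumes g: "g holomorphic_on UNIV" and p: "p holomorphic_on UNIV" and r: "0 < r"
    and small: "\<forall>z\<in>sphere 0 r. norm (p z) < norm (g z - b)"
    and D: "D \<subseteq> ball 0 r" "\<forall>d\<in>D. 0 < mu d \<and> vanishes_to_order (mu d) (\<lambda>z. g z - b + p z) d"
    and sums: "(\<Sum>d\<in>D. mu d) = (\<Sum>z\<in>{z\<in>ball 0 r. g z = b}. value_multiplicity g z)"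
  shows "{z\<in>ball 0 r. g z + p z = b} = D"
proof -
  have "complex_of_real r \<in> sphere 0 r" using r by simp
  then have "norm (p (of_real r)) < norm (g (of_real r) - b)" using small by blast
  then have "g (of_real r) \<noteq> b" by auto
  then have "zorder (\<lambda>z. g z - b) z = int (value_multiplicity g z)" if "g z = b" for z
    using zorder_eq_value_multiplicity[OF g, of "of_real r" z] that by simp
  then have "(\<Sum>z\<in>{z\<in>ball 0 r. g z - b = 0}. zorder (\<lambda>z. g z - b) z)
      = (\<Sum>z\<in>{z\<in>ball 0 r. g z = b}. int (value_multiplicity g z))"
    by (intro sum.cong) auto
  also have "\<dots> = (\<Sum>d\<in>D. int (mu d))"
    unfolding of_nat_sum[symmetric] sums ..
  finally have sums': "(\<Sum>d\<in>D. int (mu d)) = (\<Sum>z\<in>{z\<in>ball 0 r. g z - b = 0}. zorder (\<lambda>z. g z - b) z)"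
    by simp
  have "(\<lambda>z. g z - b) holomorphic_on UNIV" using g by (intro holomorphic_intros)
  from Rouche_zero_set_eq[OF this p r small D sums']
  have "{z\<in>ball 0 r. g z - b + p z = 0} = D" .
  moreover have "{z\<in>ball 0 r. g z - b + p z = 0} = {z\<in>ball 0 r. g z + p z = b}"
    by (simp add: diff_add_eq)
  ultimately show ?thesis by simp
qed

lemma level_set_after_moving_point:
  fixes g p :: "complex \<Rightarrow> complex" and b :: complex and r :: real
  defines "Z \<equiv> {z\<in>ball 0 r. g z = b}"
  assumes g: "g holomorphic_on UNIV" and p: "p holomorphic_on UNIV" and r: "0 < r"
    and small: "\<forall>z\<in>sphere 0 r. norm (p z) < norm (g z - b)"
    and w: "w \<in> ball 0 r" "g w \<noteq> b"
    and keep: "\<forall>s\<in>Z - {z0}. vanishes_to_order (value_multiplicity g s) p s"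
    and move: "g z0 = b \<Longrightarrow> z0 \<in> ball 0 r \<and> vanishes_to_order (value_multiplicity g z0) (\<lambda>z. g z - b + p z) w"
  shows "{z\<in>ball 0 r. g z + p z = b} = (if g z0 = b then insert w (Z - {z0}) else Z)"
proof (rule Rouche_level_set_eq[OF g p r small])
  define m where "m = value_multiplicity g"
  have "complex_of_real r \<in> sphere 0 r" using r by simp
  then have "norm (p (of_real r)) < norm (g (of_real r) - b)" using small by blast
  then have "g (of_real r) \<noteq> b" by auto
  then have m: "0 < m s" "vanishes_to_order (m s) (\<lambda>z. g z - b) s" if "s \<in> Z" for s
    using value_multiplicity_pos[OF g, of "of_real r" s] vanishes_to_order_value_multiplicity[OF g, of "of_real r" s]
      that unfolding m_def Z_def by auto
  show "(if g z0 = b then insert w (Z - {z0}) else Z) \<subseteq> ball 0 r"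
    using w by (auto simp: Z_def)
  show "\<forall>d\<in>(if g z0 = b then insert w (Z - {z0}) else Z).
      0 < (m(w := m z0)) d \<and> vanishes_to_order ((m(w := m z0)) d) (\<lambda>z. g z - b + p z) d"
  proof
    fix d assume d: "d \<in> (if g z0 = b then insert w (Z - {z0}) else Z)"
    show "0 < (m(w := m z0)) d \<and> vanishes_to_order ((m(w := m z0)) d) (\<lambda>z. g z - b + p z) d"
    proof (cases "d = w")
      case True
      then show ?thesis using d w move m(1)[of z0] by (auto simp: m_def Z_def split: if_splits)
    next
      case False
      then have d: "d \<in> Z - {z0}" using d by (auto simp: Z_def split: if_splits)
      have "(\<lambda>z. g z - b) holomorphic_on UNIV" using g by (intro holomorphic_intros)
      then have "vanishes_to_order (m d) (\<lambda>z. g z - b + p z) d"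
        using d m(2) keep by (intro vanishes_to_order_add[OF _ p open_UNIV UNIV_I]) (auto simp: m_def)
      then show ?thesis using d m(1) False by simp
    qed
  qed
  have "finite {z\<in>ball 0 r. g z - b = 0}"
    by (rule entire_finite_zeros[of _ "of_real r"])
       (use g \<open>g (of_real r) \<noteq> b\<close> in \<open>auto intro!: holomorphic_intros\<close>)
  then have "finite Z" "w \<notin> Z" using w by (simp_all add: Z_def)
  then show "(\<Sum>d\<in>(if g z0 = b then insert w (Z - {z0}) else Z). (m(w := m z0)) d)
      = (\<Sum>z\<in>{z\<in>ball 0 r. g z = b}. value_multiplicity g z)"
    using sum_replace_point[of Z z0 w m] move by (auto simp: m_def Z_def intro!: sum.cong)
qed

lemma preimage_ball_after_moving_point:
  fixes g p :: "complex \<Rightarrow> complex" and B :: "complex set" and r :: real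
  defines "S \<equiv> {z\<in>ball 0 r. g z \<in> B}"
  assumes g: "g holomorphic_on UNIV" and p: "p holomorphic_on UNIV" and r: "0 < r"
    and small: "\<forall>b\<in>B. \<forall>z\<in>sphere 0 r. norm (p z) < norm (g z - b)"
    and z0: "z0 \<in> S" and w: "w \<in> ball 0 r - S"
    and keep: "\<forall>s\<in>S - {z0}. vanishes_to_order (value_multiplicity g s) p s"
    and move: "vanishes_to_order (value_multiplicity g z0) (\<lambda>z. g z - g z0 + p z) w"
  shows "{z\<in>ball 0 r. g z + p z \<in> B} = insert w (S - {z0})"
proof -
  have level: "{z\<in>ball 0 r. g z + p z = b}
      = (if g z0 = b then insert w ({z\<in>ball 0 r. g z = b} - {z0}) else {z\<in>ball 0 r. g z = b})"
    if b: "b \<in> B" for b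
  proof (rule level_set_after_moving_point[OF g p r])
    show "\<forall>z\<in>sphere 0 r. norm (p z) < norm (g z - b)" using small b by blast
    show "w \<in> ball 0 r" "g w \<noteq> b" using w b by (auto simp: S_def)
    show "\<forall>s\<in>{z\<in>ball 0 r. g z = b} - {z0}. vanishes_to_order (value_multiplicity g s) p s"
      using keep b by (auto simp: S_def)
    show "z0 \<in> ball 0 r \<and> vanishes_to_order (value_multiplicity g z0) (\<lambda>z. g z - b + p z) w"
      if "g z0 = b" using z0 move that by (auto simp: S_def)
  qed
  show ?thesis
  proof (intro equalityI subsetI)
    fix z assume z: "z \<in> {z\<in>ball 0 r. g z + p z \<in> B}"
    define b where "b = g z + p z"
    have b: "b \<in> B" "z \<in> {z\<in>ball 0 r. g z + p z = b}"
      using z by (auto simp: b_def)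
    then have "z \<in> (if g z0 = b then insert w ({z\<in>ball 0 r. g z = b} - {z0}) else {z\<in>ball 0 r. g z = b})"
      using level[OF b(1)] by blast
    then show "z \<in> insert w (S - {z0})"
      using b(1) by (cases "g z0 = b") (auto simp: S_def)
  next
    fix z assume z: "z \<in> insert w (S - {z0})"
    define b where "b = (if z = w then g z0 else g z)"
    have b: "b \<in> B" using z z0 by (auto simp: b_def S_def)
    have "z \<in> {z\<in>ball 0 r. g z + p z = b}"
      using level[OF b] z w by (auto simp: b_def S_def)
    then show "z \<in> {z\<in>ball 0 r. g z + p z \<in> B}" using b by auto
  qed
qed

definition vanishing_poly :: "complex set \<Rightarrow> complex set \<Rightarrow> (complex \<Rightarrow> nat) \<Rightarrow> complex poly" where
  "vanishing_poly A S m = (\<Prod>a\<in>A. [:-a, 1:] ^ 2) * (\<Prod>s\<in>S. [:-s, 1:] ^ m s)"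

lemma vanishes_to_order_2_vanishing_poly:
  assumes "finite A" "a \<in> A"
  shows "vanishes_to_order 2 (poly (vanishing_poly A S m * T)) a"
  using vanishes_to_order_poly_prod[OF assms, of "\<lambda>_. 2" "(\<Prod>s\<in>S. [:-s, 1:] ^ m s) * T"]
  by (simp add: vanishing_poly_def mult.assoc)

lemma vanishes_to_order_vanishing_poly:
  assumes "finite S" "s \<in> S"
  shows "vanishes_to_order (m s) (poly (vanishing_poly A S m * T)) s"
  using vanishes_to_order_poly_prod[OF assms, of m "(\<Prod>a\<in>A. [:-a, 1:] ^ 2) * T"]
  by (simp add: vanishing_poly_def ac_simps)

lemma poly_vanishing_poly_nonzero:
  assumes "finite A" "finite S" "z \<notin> A" "z \<notin> S"
  shows "poly (vanishing_poly A S m) z \<noteq> 0"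
  using poly_prod_linear_power_nonzero[OF assms(1,3), of "\<lambda>_. 2"]
    poly_prod_linear_power_nonzero[OF assms(2,4), of m]
  by (simp add: vanishing_poly_def)

lemma dense_point_avoiding_finite:
  fixes E U S :: "'a::t1_space set"
  assumes "closure E = UNIV" "open U" "z \<in> U - E" "finite S"
  obtains w where "w \<in> E \<inter> U - S"
proof -
  have "open (U - (S - {z}))" using assms(2,4) by (intro open_Diff finite_imp_closed) auto
  moreover have "z \<in> U - (S - {z})" using assms(3) by blast
  ultimately obtain w where "w \<in> U - (S - {z})" "w \<in> E"
    using open_Int_closure_eq_empty[of "U - (S - {z})" E] assms(1) by blast
  then show ?thesis using that assms(3) by auto
qed

text \<open>The degree bound does not depend on \<open>\<epsilon>\<close>: smallness on the unit circle controls the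
  metric \<open>dF\<close> only uniformly over polynomials of bounded degree (\<open>dF_add_small_poly\<close>).\<close>
lemma exists_poly_moving_point_into_dense_set:
  fixes g :: "complex \<Rightarrow> complex" and A B E :: "complex set" and r Rb :: real
  defines "S \<equiv> {z\<in>ball 0 r. g z \<in> B}" and "m \<equiv> value_multiplicity g"
  assumes g: "g holomorphic_on UNIV" and r: "0 < r" and B: "finite B"
    and sph: "\<forall>z\<in>sphere 0 r. g z \<notin> B"
    and E: "closure E = UNIV" and A: "finite A" "A \<subseteq> E" and z0: "z0 \<in> S - E" and "0 < \<epsilon>"
  shows "\<exists>P w. degree P \<le> degree (vanishing_poly A (S - {z0}) m) + m z0
           \<and> (\<forall>z\<in>cball 0 Rb. norm (poly P z) \<le> \<epsilon>)
           \<and> w \<in> E \<inter> ball 0 r - S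
           \<and> (\<forall>a\<in>A. vanishes_to_order 2 (poly P) a)
           \<and> (\<forall>s\<in>S - {z0}. vanishes_to_order (m s) (poly P) s)
           \<and> vanishes_to_order (m z0) (\<lambda>z. g z - g z0 + poly P z) w"
proof -
  define Q where "Q = vanishing_poly A (S - {z0}) m"
  have finS: "finite S"
    unfolding S_def by (rule finite_preimage_ball[OF g B r sph])
  have Q: "poly Q z0 \<noteq> 0"
    unfolding Q_def using z0 A finS by (intro poly_vanishing_poly_nonzero) auto
  have h: "(\<lambda>z. g z - g z0) holomorphic_on UNIV" using g by (intro holomorphic_intros)
  have "g (of_real r) \<notin> B" using sph r by simp
  then have h_r: "g (of_real r) - g z0 \<noteq> 0" using z0 by (auto simp: S_def)
  obtain \<rho> where \<rho>: "0 < \<rho>" "\<forall>w\<in>ball z0 \<rho>. \<exists>T. degree T \<le> m z0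
      \<and> vanishes_to_order (m z0) (\<lambda>z. g z - g z0 + poly (Q * T) z) w
      \<and> (\<forall>z\<in>cball 0 Rb. norm (poly (Q * T) z) \<le> \<epsilon>)"
    using exists_poly_moving_zero[OF h h_r Q \<open>0 < \<epsilon>\<close>, of Rb]
    unfolding m_def value_multiplicity_def by blast
  have "z0 \<in> ball z0 \<rho> \<inter> ball 0 r - E" using z0 \<rho>(1) by (auto simp: S_def)
  then obtain w where w: "w \<in> E \<inter> (ball z0 \<rho> \<inter> ball 0 r) - S"
    by (rule dense_point_avoiding_finite[OF E open_Int[OF open_ball open_ball] _ finS])
  then have "w \<in> ball z0 \<rho>" by blast
  then obtain T where T: "degree T \<le> m z0"
      "vanishes_to_order (m z0) (\<lambda>z. g z - g z0 + poly (Q * T) z) w"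
      "\<forall>z\<in>cball 0 Rb. norm (poly (Q * T) z) \<le> \<epsilon>"
    using \<rho>(2) by blast
  show ?thesis
    unfolding Q_def[symmetric]
  proof (intro exI conjI)
    show "degree (Q * T) \<le> degree Q + m z0"
      using T(1) degree_mult_le[of Q T] by linarith
    show "w \<in> E \<inter> ball 0 r - S" using w by blast
    show "\<forall>a\<in>A. vanishes_to_order 2 (poly (Q * T)) a"
      using vanishes_to_order_2_vanishing_poly[OF A(1)] by (simp add: Q_def)
    show "\<forall>s\<in>S - {z0}. vanishes_to_order (m s) (poly (Q * T)) s"
      using vanishes_to_order_vanishing_poly[of "S - {z0}"] finS by (simp add: Q_def)
  qed (use T in auto)
qed

definition exceptional_points :: "complex set \<Rightarrow> complex set \<Rightarrow> real \<Rightarrow> (complex \<Rightarrow> complex) \<Rightarrow> complex set" where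
  "exceptional_points E B r h = {z\<in>ball 0 r. h z \<in> B} - E"

lemma finite_exceptional_points:
  assumes "g holomorphic_on UNIV" "finite B" "0 < r" "\<forall>z\<in>sphere 0 r. g z \<notin> B"
  shows "finite (exceptional_points E B r g)"
  using finite_preimage_ball[OF assms] by (simp add: exceptional_points_def)

lemma exists_margin_on_sphere:
  fixes g :: "complex \<Rightarrow> complex"
  assumes "continuous_on (sphere 0 r) g" "finite B" "\<forall>z\<in>sphere 0 r. g z \<notin> B"
  obtains \<mu> where "0 < \<mu>" "\<forall>b\<in>B. \<forall>z\<in>sphere 0 r. \<mu> \<le> norm (g z - b)"
proof -
  have "compact (g ` sphere 0 r)"
    using assms(1) by (intro compact_continuous_image) auto
  from separate_compact_closed[OF this finite_imp_closed[OF assms(2)]] assms(3)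
  obtain \<mu> where "0 < \<mu>" "\<forall>x\<in>g ` sphere 0 r. \<forall>b\<in>B. \<mu> \<le> dist x b"
    by blast
  then show ?thesis using that by (auto simp: dist_norm)
qed

lemma FA_perturbation_removing_point:
  fixes B E :: "complex set"
  assumes F: "frechet_entire_space F nrm" and E: "closure E = UNIV"
    and A: "finite A" "A \<subseteq> E" and B: "finite B" and r: "0 < r"
    and g: "g \<in> FA F f A" and sph: "\<forall>z\<in>sphere 0 r. g z \<notin> B"
    and z0: "z0 \<in> exceptional_points E B r g" and "0 < \<delta>"
  shows "\<exists>g'\<in>FA F f A. dF nrm g g' < \<delta> \<and> (\<forall>z\<in>sphere 0 r. g' z \<notin> B)
           \<and> exceptional_points E B r g' = exceptional_points E B r g - {z0}"
proof -
  define S where "S = {z\<in>ball 0 r. g z \<in> B}"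
  have gF: "g \<in> F" using g by (simp add: FA_def)
  have hol: "g holomorphic_on UNIV" by (rule frechet_entire_space_holomorphic[OF F gF])
  define N where "N = degree (vanishing_poly A (S - {z0}) (value_multiplicity g)) + value_multiplicity g z0"
  obtain \<eta> where \<eta>: "0 < \<eta>" "\<And>p h. degree p \<le> N \<Longrightarrow> h \<in> F \<Longrightarrow> \<forall>z\<in>sphere 0 1. norm (poly p z) \<le> \<eta>
      \<Longrightarrow> dF nrm h (\<lambda>z. h z + poly p z) < \<delta>"
    using dF_add_small_poly[OF F \<open>0 < \<delta>\<close>] by metis
  obtain \<mu> where \<mu>: "0 < \<mu>" "\<forall>b\<in>B. \<forall>z\<in>sphere 0 r. \<mu> \<le> norm (g z - b)"
    using exists_margin_on_sphere[OF _ B sph] hol holomorphic_on_imp_continuous_on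
      holomorphic_on_subset subset_UNIV by metis
  have \<epsilon>: "0 < min \<eta> (\<mu> / 2)" using \<eta>(1) \<mu>(1) by simp
  \<comment> \<open>\<open>cball 0 (max r 1)\<close> contains the circle \<open>\<bar>z\<bar> = r\<close>, for Rouche, and the unit circle, for \<open>dF\<close>.\<close>
  then obtain P w where P: "degree P \<le> N" "\<forall>z\<in>cball 0 (max r 1). norm (poly P z) \<le> min \<eta> (\<mu> / 2)"
      "w \<in> E \<inter> ball 0 r - S" "\<forall>a\<in>A. vanishes_to_order 2 (poly P) a"
      "\<forall>s\<in>S - {z0}. vanishes_to_order (value_multiplicity g s) (poly P) s"
      "vanishes_to_order (value_multiplicity g z0) (\<lambda>z. g z - g z0 + poly P z) w"
    using exists_poly_moving_point_into_dense_set[OF hol r B sph E A _ \<epsilon>, of z0 "max r 1"] z0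
    unfolding N_def S_def exceptional_points_def by auto
  have small: "\<forall>b\<in>B. \<forall>z\<in>sphere 0 r. norm (poly P z) < norm (g z - b)"
  proof (intro ballI)
    fix b and z :: complex assume "b \<in> B" "z \<in> sphere 0 r"
    then have "norm (poly P z) \<le> \<mu> / 2" "\<mu> \<le> norm (g z - b)"
      using P(2) \<mu>(2) by auto
    then show "norm (poly P z) < norm (g z - b)" using \<mu>(1) by linarith
  qed
  have "poly P holomorphic_on UNIV" by (intro holomorphic_intros)
  then have preimage: "{z\<in>ball 0 r. g z + poly P z \<in> B} = insert w (S - {z0})"
    using preimage_ball_after_moving_point[OF hol _ r small, of z0 w] z0 P(3,5,6)
    unfolding S_def exceptional_points_def by blast
  show ?thesis
  proof (intro bexI conjI)
    show "(\<lambda>z. g z + poly P z) \<in> FA F f A" by (rule FA_add_poly[OF F g P(4)])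
    show "dF nrm g (\<lambda>z. g z + poly P z) < \<delta>"
      using P(2) by (intro \<eta>(2)[OF P(1) gF]) auto
    show "\<forall>z\<in>sphere 0 r. g z + poly P z \<notin> B"
    proof (intro ballI notI)
      fix z assume "z \<in> sphere 0 r" "g z + poly P z \<in> B"
      then have "norm (poly P z) < norm (g z - (g z + poly P z))" using small by blast
      then show False by simp
    qed
    show "exceptional_points E B r (\<lambda>z. g z + poly P z) = exceptional_points E B r g - {z0}"
      using preimage P(3) by (auto simp: exceptional_points_def S_def)
  qed
qed

lemma exists_radius_avoiding_values:
  fixes h :: "complex \<Rightarrow> complex" and R :: real
  assumes "h holomorphic_on UNIV" "finite B" "\<forall>b\<in>B. \<exists>z. h z \<noteq> b"
  obtains r where "R < r" "\<forall>z\<in>sphere 0 r. h z \<notin> B"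
proof -
  define Z where "Z = {z\<in>cball 0 (R + 1). h z \<in> B}"
  have "finite {z\<in>cball 0 (R + 1). h z - b = 0}" if "b \<in> B" for b
  proof -
    from assms(3) that obtain z1 where "h z1 \<noteq> b" by blast
    then have "h z1 - b \<noteq> 0" by simp
    moreover have "(\<lambda>z. h z - b) holomorphic_on UNIV"
      using assms(1) by (intro holomorphic_intros)
    ultimately show ?thesis by (intro entire_finite_zeros) auto
  qed
  moreover have "Z = (\<Union>b\<in>B. {z\<in>cball 0 (R + 1). h z - b = 0})"
    by (auto simp: Z_def)
  ultimately have "finite (norm ` Z)" using assms(2) by simp
  moreover have "infinite {R<..<R + 1}" by simp
  ultimately have "\<not> {R<..<R + 1} \<subseteq> norm ` Z"
    using finite_subset by blast
  then obtain r where "r \<in> {R<..<R + 1}" "r \<notin> norm ` Z" by blast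
  then have r: "R < r" "r < R + 1" "r \<notin> norm ` Z" by auto
  show ?thesis
  proof (rule that[OF r(1)], intro ballI notI)
    fix z assume z: "z \<in> sphere 0 r" "h z \<in> B"
    then have "z \<in> Z" using r by (auto simp: Z_def)
    then have "r \<in> norm ` Z" using z by force
    with r(3) show False ..
  qed
qed

lemma exists_FA_perturbation_preimage_subset:
  fixes B E :: "complex set"
  assumes F: "frechet_entire_space F nrm" and E: "closure E = UNIV"
    and A: "finite A" "A \<subseteq> E" and B: "finite B" and r: "0 < r"
    and g: "g \<in> FA F f A" and sph: "\<forall>z\<in>sphere 0 r. g z \<notin> B" and "0 < \<delta>"
  shows "\<exists>g'\<in>FA F f A. dF nrm g g' < \<delta> \<and> g' -` B \<inter> ball 0 r \<subseteq> E"
proof -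
  have fin: "finite (exceptional_points E B r h)"
    if "h \<in> FA F f A" "\<forall>z\<in>sphere 0 r. h z \<notin> B" for h
    using that frechet_entire_space_holomorphic[OF F] finite_exceptional_points[OF _ B r]
    by (auto simp: FA_def)
  obtain n where "card (exceptional_points E B r g) = n" by blast
  then show ?thesis using g sph \<open>0 < \<delta>\<close>
  proof (induction n arbitrary: g \<delta>)
    case 0
    then have "exceptional_points E B r g = {}" using fin by simp
    moreover have "dF nrm g g = 0"
      using 0 dF_self[OF F] by (simp add: FA_def)
    ultimately show ?case
      using 0 by (intro bexI[of _ g]) (auto simp: exceptional_points_def)
  next
    case (Suc n)
    then have "exceptional_points E B r g \<noteq> {}" by auto
    then obtain z0 where z0: "z0 \<in> exceptional_points E B r g" by blast
    obtain g1 where g1: "g1 \<in> FA F f A" "dF nrm g g1 < \<delta> / 2" "\<forall>z\<in>sphere 0 r. g1 z \<notin> B"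
        "exceptional_points E B r g1 = exceptional_points E B r g - {z0}"
      using FA_perturbation_removing_point[OF F E A B r Suc.prems(2,3) z0, of "\<delta> / 2"] Suc.prems(4)
      by auto
    have "card (exceptional_points E B r g1) = n"
      using g1(4) Suc.prems(1) z0 fin[OF Suc.prems(2,3)] by simp
    moreover have "0 < \<delta> / 2" using Suc.prems(4) by simp
    ultimately obtain g' where g': "g' \<in> FA F f A" "dF nrm g1 g' < \<delta> / 2" "g' -` B \<inter> ball 0 r \<subseteq> E"
      using Suc.IH[OF _ g1(1,3)] by blast
    have "dF nrm g g' \<le> dF nrm g g1 + dF nrm g1 g'"
      using Suc.prems(2) g1(1) g'(1) by (intro dF_triangle[OF F]) (auto simp: FA_def)
    then show ?case using g1(2) g'(2,3) g'(1) by (intro bexI[of _ g']) auto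
  qed
qed

theorem lemma2p4:
  fixes F :: "(complex \<Rightarrow> complex) set"
    and nrm :: "nat \<Rightarrow> (complex \<Rightarrow> complex) \<Rightarrow> real"
    and E A B :: "complex set"
    and f :: "complex \<Rightarrow> complex"
    and R \<epsilon> :: real
  assumes "frechet_entire_space F nrm"
    and "countable E" and "closure E = UNIV"
    and "f \<in> F" and "\<not> (\<exists>a b. \<forall>z. f z = a * z + b)"
    and "finite A" and "A \<subseteq> E"
    and "finite B"
    and "R > 0" and "\<epsilon> > 0"
  shows "\<exists>g\<in>FA F f A. dF nrm f g < \<epsilon> \<and> g -` B \<inter> ball 0 R \<subseteq> E"
proof -
  have hol: "f holomorphic_on UNIV"
    using frechet_entire_space_holomorphic assms(1,4) by blast
  have nonconst: "\<forall>b\<in>B. \<exists>z. f z \<noteq> b"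
  proof
    fix b show "\<exists>z. f z \<noteq> b"
      using assms(5) by (metis mult_zero_left add_0)
  qed
  obtain r where r: "R < r" "\<forall>z\<in>sphere 0 r. f z \<notin> B"
    using exists_radius_avoiding_values[OF hol assms(8) nonconst] by blast
  have "0 < r" using r(1) assms(9) by simp
  moreover have "f \<in> FA F f A" using assms(4) by (simp add: FA_def)
  ultimately obtain g where g: "g \<in> FA F f A" "dF nrm f g < \<epsilon>" "g -` B \<inter> ball 0 r \<subseteq> E"
    using exists_FA_perturbation_preimage_subset[OF assms(1,3,6,7,8) _ _ r(2) assms(10)] by blast
  moreover have "ball 0 R \<subseteq> ball (0::complex) r" using r(1) by auto
  ultimately show ?thesis by blast
qed

end
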